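(* Let $x_2>0$, $x_1\in(0,x_2)$ and $y_1,y_2,y_3\in\mathbb R$ with $0<y_3<y_1\le y_2$. Define $\rho_1,\rho_2:[0,x_2]\to\mathbb R$ by $\rho_1(x)=\frac{y_2-y_1}{x_1}x+y_1$ for $x\in[0,x_1]$, $\rho_1(x)=\frac{y_3-y_2}{x_2-x_1}(x-x_1)+y_2$ for $x\in(x_1,x_2]$, and $\rho_2(x)=\frac{y_3-y_1}{x_2}x+y_1$. Then $\mathcal N(\rho_2)\le\mathcal N(\rho_1)$, where $\mathcal N(\rho)=\int_0^{x_2}\frac{(\rho')^2}{\rho\sqrt{1+(\rho')^2}}\,dx$. *)

theory Defs
  imports "HOL-Analysis.Analysis"
begin

definition N_fun :: "(real \<Rightarrow> real) \<Rightarrow> real \<Rightarrow> real" where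
  "N_fun \<rho> L = integral {0..L}
     (\<lambda>x. (deriv \<rho> x)\<^sup>2 / (\<rho> x * sqrt (1 + (deriv \<rho> x)\<^sup>2)))"

end

theory Submission
  imports Defs
begin

text \<open>On a piece where \<open>\<rho>\<close> is affine with slope \<open>m\<close>, the integrand of \<open>N\<close> is
  \<open>m\<^sup>2 / (\<rho> \<surd>(1+m\<^sup>2))\<close>, whose integral is \<open>m/\<surd>(1+m\<^sup>2)\<close> times the increment of \<open>ln \<rho>\<close>.
  So \<open>N(\<rho>\<^sub>2) = g(s) (ln y\<^sub>3 - ln y\<^sub>1)\<close> with \<open>g t = t/\<surd>(1+t\<^sup>2)\<close> and \<open>s\<close> the slope of \<open>\<rho>\<^sub>2\<close>, while
  \<open>N(\<rho>\<^sub>1)\<close> consists of a nonnegative rising part plus \<open>g(m\<^sub>2) (ln y\<^sub>3 - ln y\<^sub>2)\<close>. The falling slope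
  \<open>m\<^sub>2\<close> of \<open>\<rho>\<^sub>1\<close> is steeper than \<open>s\<close> and \<open>\<rho>\<^sub>1\<close> falls from the higher value \<open>y\<^sub>2\<close>; as \<open>g\<close> is
  increasing, both factors of the falling part dominate those of \<open>N(\<rho>\<^sub>2)\<close>.\<close>

lemma divide_sqrt_one_plus_square_mono:
  fixes a b :: real
  assumes "a \<le> b"
  shows "a / sqrt (1 + a\<^sup>2) \<le> b / sqrt (1 + b\<^sup>2)"
proof -
  have nonneg_case: "u / sqrt (1 + u\<^sup>2) \<le> v / sqrt (1 + v\<^sup>2)" if "0 \<le> u" "u \<le> v" for u v :: real
  proof -
    have as_sqrt: "t / sqrt (1 + t\<^sup>2) = sqrt (1 - 1 / (1 + t\<^sup>2))" if "0 \<le> t" for t :: real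
    proof -
      have "0 < 1 + t\<^sup>2" by (simp add: add_pos_nonneg)
      hence "1 - 1 / (1 + t\<^sup>2) = t\<^sup>2 / (1 + t\<^sup>2)" by (simp add: divide_simps)
      thus ?thesis using that by (simp add: real_sqrt_divide)
    qed
    have "u\<^sup>2 \<le> v\<^sup>2" using that by (simp add: power_mono)
    hence "1 / (1 + v\<^sup>2) \<le> 1 / (1 + u\<^sup>2)"
      by (intro divide_left_mono) (auto simp: add_pos_nonneg)
    thus ?thesis using as_sqrt that by simp
  qed
  consider "0 \<le> a" | "b \<le> 0" | "a < 0" "0 < b" by linarith
  thus ?thesis
  proof cases
    case 1
    thus ?thesis using nonneg_case assms by blast
  next
    case 2
    hence "-b / sqrt (1 + (-b)\<^sup>2) \<le> -a / sqrt (1 + (-a)\<^sup>2)"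
      using nonneg_case[of "-b" "-a"] assms by simp
    thus ?thesis by simp
  next
    case 3
    hence "a / sqrt (1 + a\<^sup>2) \<le> 0" "0 \<le> b / sqrt (1 + b\<^sup>2)"
      by (simp_all add: divide_nonpos_nonneg)
    thus ?thesis by linarith
  qed
qed

lemma has_integral_slope_over_affine:
  fixes a c m u :: real
  assumes "a \<le> c" and "\<And>x. x \<in> {a..c} \<Longrightarrow> 0 < m * (x - a) + u"
  shows "((\<lambda>x. m\<^sup>2 / ((m * (x - a) + u) * sqrt (1 + m\<^sup>2))) has_integral
           m / sqrt (1 + m\<^sup>2) * (ln (m * (c - a) + u) - ln u)) {a..c}"
proof -
  have "((\<lambda>x. m\<^sup>2 / ((m * (x - a) + u) * sqrt (1 + m\<^sup>2))) has_integral
          m / sqrt (1 + m\<^sup>2) * ln (m * (c - a) + u) - m / sqrt (1 + m\<^sup>2) * ln (m * (a - a) + u)) {a..c}"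
  proof (rule fundamental_theorem_of_calculus[OF assms(1)])
    fix x assume "x \<in> {a..c}"
    hence pos: "0 < m * (x - a) + u" by (rule assms(2))
    have "((\<lambda>x. ln (m * (x - a) + u)) has_real_derivative m / (m * (x - a) + u)) (at x within {a..c})"
      using pos by (auto intro!: derivative_eq_intros)
    from DERIV_cmult[OF this, of "m / sqrt (1 + m\<^sup>2)"]
    have "((\<lambda>x. m / sqrt (1 + m\<^sup>2) * ln (m * (x - a) + u)) has_real_derivative
            m / sqrt (1 + m\<^sup>2) * (m / (m * (x - a) + u))) (at x within {a..c})" .
    moreover have "m / sqrt (1 + m\<^sup>2) * (m / (m * (x - a) + u)) = m\<^sup>2 / ((m * (x - a) + u) * sqrt (1 + m\<^sup>2))"
      by (simp add: power2_eq_square)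
    ultimately show "((\<lambda>x. m / sqrt (1 + m\<^sup>2) * ln (m * (x - a) + u)) has_vector_derivative
            m\<^sup>2 / ((m * (x - a) + u) * sqrt (1 + m\<^sup>2))) (at x within {a..c})"
      by (simp add: has_real_derivative_iff_has_vector_derivative)
  qed
  thus ?thesis by (simp add: right_diff_distrib)
qed

lemma affine_positive_between:
  fixes a c m u x :: real
  assumes "0 < u" "0 < m * (c - a) + u" "x \<in> {a..c}"
  shows "0 < m * (x - a) + u"
proof (cases "0 \<le> m")
  case True
  hence "0 \<le> m * (x - a)" using assms(3) by simp
  thus ?thesis using assms(1) by linarith
next
  case False
  hence "m * (c - a) \<le> m * (x - a)" using assms(3) by (simp add: mult_left_mono_neg)
  thus ?thesis using assms(2) by linarith
qed

text \<open>Only the values of \<open>\<rho>\<close> on the open interval matter: \<open>deriv \<rho>\<close> at the endpoints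
  may be anything, as they form a null set.\<close>

lemma N_integrand_has_integral_affine_piece:
  fixes \<rho> :: "real \<Rightarrow> real" and a c m u :: real
  assumes "a \<le> c"
    and affine: "\<And>x. x \<in> {a<..<c} \<Longrightarrow> \<rho> x = m * (x - a) + u"
    and "0 < u" "0 < m * (c - a) + u"
  shows "((\<lambda>x. (deriv \<rho> x)\<^sup>2 / (\<rho> x * sqrt (1 + (deriv \<rho> x)\<^sup>2))) has_integral
           m / sqrt (1 + m\<^sup>2) * (ln (m * (c - a) + u) - ln u)) {a..c}"
proof (rule has_integral_spike_finite[of "{a, c}"])
  show "((\<lambda>x. m\<^sup>2 / ((m * (x - a) + u) * sqrt (1 + m\<^sup>2))) has_integral
          m / sqrt (1 + m\<^sup>2) * (ln (m * (c - a) + u) - ln u)) {a..c}"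
    using has_integral_slope_over_affine affine_positive_between assms by blast
next
  fix x assume "x \<in> {a..c} - {a, c}"
  hence x: "x \<in> {a<..<c}" by auto
  have "(\<rho> has_field_derivative m) (at x)"
    by (rule has_field_derivative_transform_within_open[where f="\<lambda>x. m * (x - a) + u" and S="{a<..<c}"])
       (use x affine in \<open>auto intro!: derivative_eq_intros\<close>)
  hence "deriv \<rho> x = m" by (rule DERIV_imp_deriv)
  thus "(deriv \<rho> x)\<^sup>2 / (\<rho> x * sqrt (1 + (deriv \<rho> x)\<^sup>2)) = m\<^sup>2 / ((m * (x - a) + u) * sqrt (1 + m\<^sup>2))"
    using affine[OF x] by simp
qed simp

theorem lemma2p3:
  fixes x1 x2 y1 y2 y3 :: real
    and \<rho>1 \<rho>2 :: "real \<Rightarrow> real"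
  assumes "x2 > 0" and "0 < x1" and "x1 < x2"
    and "0 < y3" and "y3 < y1" and "y1 \<le> y2"
    and "\<rho>1 = (\<lambda>x. if x \<le> x1 then (y2 - y1) / x1 * x + y1
                     else (y3 - y2) / (x2 - x1) * (x - x1) + y2)"
    and "\<rho>2 = (\<lambda>x. (y3 - y1) / x2 * x + y1)"
  shows "N_fun \<rho>2 x2 \<le> N_fun \<rho>1 x2"
proof -
  define s m1 m2 where "s = (y3 - y1) / x2" and "m1 = (y2 - y1) / x1" and "m2 = (y3 - y2) / (x2 - x1)"
  define g :: "real \<Rightarrow> real" where "g t = t / sqrt (1 + t\<^sup>2)" for t
  have N2: "N_fun \<rho>2 x2 = g s * (ln y3 - ln y1)"
    unfolding N_fun_def g_def
    using N_integrand_has_integral_affine_piece[of 0 x2 \<rho>2 s y1] assms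
    by (intro integral_unique) (simp_all add: s_def)
  have rising: "((\<lambda>x. (deriv \<rho>1 x)\<^sup>2 / (\<rho>1 x * sqrt (1 + (deriv \<rho>1 x)\<^sup>2))) has_integral
                  g m1 * (ln y2 - ln y1)) {0..x1}"
    unfolding g_def
    using N_integrand_has_integral_affine_piece[of 0 x1 \<rho>1 m1 y1] assms
    by (simp add: m1_def)
  have falling: "((\<lambda>x. (deriv \<rho>1 x)\<^sup>2 / (\<rho>1 x * sqrt (1 + (deriv \<rho>1 x)\<^sup>2))) has_integral
                  g m2 * (ln y3 - ln y2)) {x1..x2}"
    unfolding g_def
    using N_integrand_has_integral_affine_piece[of x1 x2 \<rho>1 m2 y2] assms
    by (simp add: m2_def)
  have N1: "N_fun \<rho>1 x2 = g m1 * (ln y2 - ln y1) + g m2 * (ln y3 - ln y2)"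
    unfolding N_fun_def using assms(2,3)
    by (intro integral_unique has_integral_combine[OF _ _ rising falling]) simp_all
  have "m2 \<le> s"
  proof -
    have "(y3 - y2) / (x2 - x1) \<le> (y3 - y2) / x2"
      using assms by (intro divide_left_mono_neg) auto
    also have "\<dots> \<le> (y3 - y1) / x2" using assms by (simp add: divide_right_mono)
    finally show ?thesis unfolding m2_def s_def .
  qed
  hence "- g s \<le> - g m2" unfolding g_def by (simp add: divide_sqrt_one_plus_square_mono)
  moreover have "s < 0" using assms by (simp add: s_def divide_neg_pos)
  hence "0 \<le> - g s" by (simp add: g_def divide_nonpos_nonneg)
  ultimately have falling_dominates: "g s * (ln y3 - ln y1) \<le> g m2 * (ln y3 - ln y2)"
    using mult_mono[of "- g s" "- g m2" "ln y1 - ln y3" "ln y2 - ln y3"] assms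
    by (simp add: right_diff_distrib)
  have "0 \<le> g m1 * (ln y2 - ln y1)" using assms by (simp add: g_def m1_def)
  thus ?thesis unfolding N1 N2 using falling_dominates by linarith
qed

end
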